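(* Let $\lambda = \lambda(d)$ be a function with $\lambda(d) \le d$ for all $d$ and $\lambda(d) \to \infty$ as $d \to \infty$. For every $\varepsilon > 0$ there exists $d_0$ such that the following holds for every $d \ge d_0$: if $G$ is a graph with $n$ vertices, average degree at most $d$, and at most $d^2 n / \lambda^3$ triangles (where $\lambda = \lambda(d)$), then $$\alpha(G) \ge (1 - \varepsilon) \frac{n \log \lambda}{d}.$$ (In the paper's asymptotic notation: $\alpha(G) \ge (1+o(1)) \frac{n \log \lambda}{d}$ as $d \to \infty$.)
   Context: $\alpha(G)$ denotes the independence number of $G$ (the size of a largest independent set), and $\log$ is the natural logarithm. *)

theory Defs
  imports Complex_Main
begin

text \<open>A finite simple graph on vertex set V (vertices are naturals, which is no
loss of generality for finite graphs) with symmetric irreflexive adjacency E,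
all edges lying inside V.\<close>
definition simple_graph :: "nat set \<Rightarrow> (nat \<Rightarrow> nat \<Rightarrow> bool) \<Rightarrow> bool" where
  "simple_graph V E \<longleftrightarrow> finite V \<and> (\<forall>u v. E u v \<longrightarrow> E v u)
     \<and> (\<forall>u. \<not> E u u) \<and> (\<forall>u v. E u v \<longrightarrow> u \<in> V \<and> v \<in> V)"

definition edge_set :: "nat set \<Rightarrow> (nat \<Rightarrow> nat \<Rightarrow> bool) \<Rightarrow> nat set set" where
  "edge_set V E = {{u, v} | u v. u \<in> V \<and> v \<in> V \<and> E u v}"

definition avg_degree :: "nat set \<Rightarrow> (nat \<Rightarrow> nat \<Rightarrow> bool) \<Rightarrow> real" where
  "avg_degree V E = 2 * real (card (edge_set V E)) / real (card V)"

definition triangles :: "nat set \<Rightarrow> (nat \<Rightarrow> nat \<Rightarrow> bool) \<Rightarrow> nat set set" where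
  "triangles V E = {T. T \<subseteq> V \<and> card T = 3 \<and> (\<forall>u\<in>T. \<forall>v\<in>T. u \<noteq> v \<longrightarrow> E u v)}"

definition independent_set :: "nat set \<Rightarrow> (nat \<Rightarrow> nat \<Rightarrow> bool) \<Rightarrow> nat set \<Rightarrow> bool" where
  "independent_set V E S \<longleftrightarrow> S \<subseteq> V \<and> (\<forall>u\<in>S. \<forall>v\<in>S. \<not> E u v)"

definition independence_number :: "nat set \<Rightarrow> (nat \<Rightarrow> nat \<Rightarrow> bool) \<Rightarrow> nat" where
  "independence_number V E = Max {card S | S. independent_set V E S}"

end

theory Submission
  imports Defs "HOL-Analysis.Derivative"
begin

text \<open>
  A Shearer-type potential argument. For a vertex set with n vertices, degree sum D and T
  ordered triangles put \<open>\<Phi> = n h(D/n) - K T\<close>, where \<open>h(x) = c ln (1 + p (x + 1)) / (x + 1)\<close>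
  is convex and decreasing. By induction on n, some independent set has at least \<open>\<Phi>\<close>
  vertices: if triangles are plentiful (\<open>h(x) + x h'(x) \<le> 3 K T / n\<close> at \<open>x = D/n\<close>), deleting a
  suitable vertex does not decrease \<open>\<Phi>\<close>; otherwise a suitable vertex v together with an
  independent set of its non-neighbourhood loses at most 1. Both are averaging arguments over
  the vertex: convexity bounds h at the new average degree by its tangent at x, and the sums
  over all vertices of degree sums and triangle counts are computed exactly (Cauchy-Schwarz
  bounds the sum of squared degrees). With \<open>c = 1 - \<delta>\<close>, \<open>p = \<delta> \<lambda> / (10 d)\<close> and
  \<open>K = 2 p\<^sup>3 / \<delta>\<close>, the triangle term costs at most n/d and
  \<open>h(d) \<ge> (1 - \<delta>)\<^sup>2 (log \<lambda> - log (10/\<delta>)) / d\<close>, which exceeds \<open>(1 - \<epsilon>) log \<lambda> / d\<close> once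
  \<open>\<lambda>\<close> is large.
\<close>

lemma ln_one_plus_lower_bound:
  fixes y :: real
  assumes "0 \<le> y"
  shows "2 * y / (1 + y) + y^2 / (1 + y)^2 \<le> 2 * ln (1 + y)"
proof -
  let ?g = "\<lambda>y::real. 2 * ln (1 + y) - 2 * y / (1 + y) - y^2 / (1 + y)^2"
  have "?g 0 \<le> ?g y"
  proof (rule deriv_nonneg_imp_mono[where g = ?g and g' = "\<lambda>x. 2 * x^2 / (1 + x)^3" and a = 0 and b = y])
    fix x :: real assume "x \<in> {0..y}"
    then have x: "0 \<le> x" by simp
    have "(?g has_real_derivative 2 * (1 / (1 + x)) - 2 * ((1 * (1 + x) - x * 1) / (1 + x)^2)
            - ((2 * x) * (1 + x)^2 - x^2 * (2 * (1 + x))) / ((1 + x)^2)^2) (at x)"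
      using x by (intro derivative_eq_intros) (auto simp: power2_eq_square)
    moreover have "2 * (1 / (1 + x)) - 2 * ((1 * (1 + x) - x * 1) / (1 + x)^2)
            - ((2 * x) * (1 + x)^2 - x^2 * (2 * (1 + x))) / ((1 + x)^2)^2 = 2 * x^2 / (1 + x)^3"
      using x by (simp add: divide_simps)
        (simp add: algebra_simps power2_eq_square power3_eq_cube power4_eq_xxxx)
    ultimately show "(?g has_real_derivative 2 * x^2 / (1 + x)^3) (at x)" by simp
  next
    fix x :: real assume "x \<in> {0..y}"
    then show "0 \<le> 2 * x^2 / (1 + x)^3" by simp
  qed (use assms in auto)
  then show ?thesis by simp
qed

definition ln_ratio :: "real \<Rightarrow> real \<Rightarrow> real" where
  "ln_ratio p z = ln (1 + p * z) / z"

definition ln_ratio' :: "real \<Rightarrow> real \<Rightarrow> real" where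
  "ln_ratio' p z = p / ((1 + p * z) * z) - ln (1 + p * z) / z^2"

lemma ln_ratio_has_derivative:
  assumes "0 < p" "0 < z"
  shows "(ln_ratio p has_real_derivative ln_ratio' p z) (at z)"
proof -
  have u: "0 < 1 + p * z" using assms by (simp add: add_pos_pos)
  show ?thesis
    unfolding ln_ratio_def[abs_def] ln_ratio'_def
    apply (rule derivative_eq_intros refl | use assms u in \<open>(simp; fail)\<close>)+
    using assms u by (simp add: divide_simps) (simp add: algebra_simps power2_eq_square)
qed

lemma ln_ratio'_has_derivative:
  assumes "0 < p" "0 < z"
  shows "(ln_ratio' p has_real_derivative
           (2 * ln (1 + p * z) - 2 * (p * z) / (1 + p * z) - (p * z)^2 / (1 + p * z)^2) / z^3) (at z)"
proof -
  have u: "0 < 1 + p * z" using assms by (simp add: add_pos_pos)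
  show ?thesis
    unfolding ln_ratio'_def[abs_def]
    apply (rule derivative_eq_intros refl | use assms u in \<open>(simp; fail)\<close>)+
    using assms u by (simp add: divide_simps)
      (simp add: algebra_simps power2_eq_square power3_eq_cube eval_nat_numeral)
qed

lemma convex_on_ln_ratio:
  assumes "0 < p"
  shows "convex_on {0<..} (ln_ratio p)"
proof (rule f''_ge0_imp_convex[where f' = "ln_ratio' p"])
  fix z :: real assume "z \<in> {0<..}"
  then have z: "0 < z" by simp
  show "(ln_ratio p has_real_derivative ln_ratio' p z) (at z)"
    using assms z by (rule ln_ratio_has_derivative)
  show "(ln_ratio' p has_real_derivative
           (2 * ln (1 + p * z) - 2 * (p * z) / (1 + p * z) - (p * z)^2 / (1 + p * z)^2) / z^3) (at z)"
    using assms z by (rule ln_ratio'_has_derivative)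
  show "0 \<le> (2 * ln (1 + p * z) - 2 * (p * z) / (1 + p * z) - (p * z)^2 / (1 + p * z)^2) / z^3"
    using ln_one_plus_lower_bound[of "p * z"] assms z by simp
qed simp

lemma ln_ratio_above_tangent:
  assumes "0 < p" "0 < z" "0 < w"
  shows "ln_ratio p z + ln_ratio' p z * (w - z) \<le> ln_ratio p w"
proof -
  have "ln_ratio' p z * (w - z) \<le> ln_ratio p w - ln_ratio p z"
    using assms
    by (intro convex_on_imp_above_tangent[OF convex_on_ln_ratio[OF assms(1)]])
      (auto simp: interior_open intro: has_field_derivative_at_within ln_ratio_has_derivative)
  then show ?thesis by simp
qed

lemma ln_one_plus_ge_div:
  fixes y :: real
  assumes "0 \<le> y"
  shows "y \<le> (1 + y) * ln (1 + y)"
proof -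
  have "ln (1 / (1 + y)) \<le> 1 / (1 + y) - 1" using assms by (intro ln_le_minus_one) simp
  then have "- ln (1 + y) * (1 + y) \<le> (1 / (1 + y) - 1) * (1 + y)"
    using assms by (intro mult_right_mono) (auto simp: ln_div)
  then show ?thesis using assms by (simp add: algebra_simps)
qed

lemma ln_ratio'_bounds:
  assumes p: "0 < p" and z: "0 < z"
  shows "ln_ratio' p z \<le> 0" and "- ln_ratio' p z \<le> p^2"
proof -
  define u where "u = 1 + p * z"
  define L where "L = ln u"
  have pz: "0 \<le> p * z" using p z by simp
  have u: "1 \<le> u" and u0: "0 < u" using pz by (simp_all add: u_def)
  have L_le: "L \<le> p * z" unfolding L_def u_def using pz by (rule ln_add_one_self_le_self)
  have L_ge: "p * z \<le> L * u" using ln_one_plus_ge_div[OF pz] by (simp add: L_def u_def mult.commute)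
  have slope_eq: "ln_ratio' p z = p / (u * z) - L / z^2" by (simp add: ln_ratio'_def u_def L_def)
  have "p / (u * z) = (p * z) / (u * z^2)" using z by (simp add: power2_eq_square)
  also have "\<dots> \<le> (L * u) / (u * z^2)" using L_ge z u0 by (intro divide_right_mono) auto
  also have "\<dots> = L / z^2" using u0 by simp
  finally show "ln_ratio' p z \<le> 0" unfolding slope_eq by simp
  have "L / z^2 - p / (u * z) = (L * u - p * z) / (u * z^2)"
    using z u0 by (simp add: field_simps power2_eq_square)
  also have "\<dots> \<le> (p * z * u - p * z) / (u * z^2)"
    using L_le z u0 by (intro divide_right_mono) auto
  also have "\<dots> = p^2 * z^2 / (u * z^2)" by (simp add: u_def algebra_simps power2_eq_square)
  also have "\<dots> = p^2 / u" using z by simp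
  also have "\<dots> \<le> p^2" using u by (simp add: divide_le_eq mult_le_cancel_left1)
  finally show "- ln_ratio' p z \<le> p^2" unfolding slope_eq by simp
qed

lemma ln_ratio_tangent_estimates:
  assumes p: "0 < p" and z: "1 \<le> z"
  shows "0 \<le> ln_ratio p z + ln_ratio' p z * (z - 1)"
    and "ln_ratio p z + ln_ratio' p z * (z - 1) \<le> 2 * p"
proof -
  define u where "u = 1 + p * z"
  define L where "L = ln u"
  have pz: "0 \<le> p * z" using p z by simp
  have u: "1 \<le> u" and u0: "0 < u" using pz by (simp_all add: u_def)
  have z0: "0 < z" using z by simp
  have L0: "0 \<le> L" using u by (simp add: L_def)
  have L_le: "L \<le> p * z" unfolding L_def u_def using pz by (rule ln_add_one_self_le_self)
  have tangent_at_one: "ln_ratio p z + ln_ratio' p z * (z - 1) = p * ((z - 1) / z) / u + L / z^2"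
    using z0 u0 by (simp add: ln_ratio_def ln_ratio'_def u_def[symmetric] L_def[symmetric]
        field_simps power2_eq_square)
  have q: "0 \<le> (z - 1) / z" "(z - 1) / z \<le> 1" using z by auto
  show "0 \<le> ln_ratio p z + ln_ratio' p z * (z - 1)"
    unfolding tangent_at_one
    by (intro add_nonneg_nonneg divide_nonneg_pos mult_nonneg_nonneg) (use q p u0 L0 z in auto)
  have "p * ((z - 1) / z) / u \<le> p * ((z - 1) / z)"
    using q p u z by (simp add: divide_le_eq mult_le_cancel_left1)
  also have "\<dots> \<le> p" using q p by (intro mult_right_le_one_le) auto
  moreover have "L / z^2 \<le> p"
  proof -
    have "p * z \<le> p * z^2" using p z by (simp add: power2_eq_square)
    then show ?thesis using L_le z0 by (simp add: divide_le_eq)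
  qed
  ultimately show "ln_ratio p z + ln_ratio' p z * (z - 1) \<le> 2 * p"
    unfolding tangent_at_one by simp
qed

lemma ln_ratio'_quadratic_estimate:
  assumes p: "0 < p" and z: "1 \<le> z"
  shows "ln (1 + p * z) - ln_ratio' p z * ((z - 1) * (2 - z)) \<le> 1 + 5 * p"
proof -
  define u where "u = 1 + p * z"
  define L where "L = ln u"
  have pz: "0 \<le> p * z" using p z by simp
  have u: "1 \<le> u" and u0: "0 < u" using pz by (simp_all add: u_def)
  have z0: "0 < z" using z by simp
  have L0: "0 \<le> L" using u by (simp add: L_def)
  have L_le: "L \<le> p * z" unfolding L_def u_def using pz by (rule ln_add_one_self_le_self)
  have "ln (1 + p * z) - ln_ratio' p z * ((z - 1) * (2 - z))
      = 3 * (L / z) - 2 * (L / z^2) + p * z / u - 3 * (p / u) + 2 * (p / (u * z))"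
    using z0 u0 by (simp add: ln_ratio'_def u_def[symmetric] L_def[symmetric] field_simps power2_eq_square)
  moreover have "L / z \<le> p" using L_le z0 by (simp add: divide_le_eq mult.commute)
  moreover have "0 \<le> L / z^2" "0 \<le> p / u" "p * z / u \<le> 1" using L0 p u0 by (auto simp: u_def)
  moreover have "p / (u * z) \<le> p"
    using u z p mult_mono[of 1 u 1 z] by (simp add: divide_le_eq)
  ultimately show ?thesis by linarith
qed

definition weight :: "real \<Rightarrow> real \<Rightarrow> real \<Rightarrow> real" where
  "weight c p x = c * ln_ratio p (x + 1)"

definition weight_slope :: "real \<Rightarrow> real \<Rightarrow> real \<Rightarrow> real" where
  "weight_slope c p x = c * ln_ratio' p (x + 1)"

lemma weight_above_tangent:
  assumes "0 < p" "0 \<le> c" "0 \<le> x" "0 \<le> y"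
  shows "weight c p x + weight_slope c p x * (y - x) \<le> weight c p y"
proof -
  have "ln_ratio p (x + 1) + ln_ratio' p (x + 1) * ((y + 1) - (x + 1)) \<le> ln_ratio p (y + 1)"
    using assms by (intro ln_ratio_above_tangent) auto
  then have "c * (ln_ratio p (x + 1) + ln_ratio' p (x + 1) * ((y + 1) - (x + 1))) \<le> c * ln_ratio p (y + 1)"
    using assms(2) by (rule mult_left_mono)
  then show ?thesis by (simp add: weight_def weight_slope_def algebra_simps)
qed

lemma weight_above_tangent_scaled:
  assumes "0 < p" "0 \<le> c" "0 \<le> x" "0 \<le> m" "0 \<le> D" "m = 0 \<Longrightarrow> D = 0"
  shows "m * weight c p x + weight_slope c p x * (D - m * x) \<le> m * weight c p (D / m)"
proof (cases "m = 0")
  case False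
  then have "m * (weight c p x + weight_slope c p x * (D / m - x)) \<le> m * weight c p (D / m)"
    using assms by (intro mult_left_mono weight_above_tangent) auto
  then show ?thesis using False by (simp add: algebra_simps)
qed (use assms in simp)

lemma weight_estimates:
  assumes p: "0 < p" and c: "0 \<le> c" and x: "0 \<le> x"
  shows "weight_slope c p x \<le> 0"
    and "- weight_slope c p x \<le> c * p^2"
    and "0 \<le> weight c p x + weight_slope c p x * x"
    and "weight c p x + weight_slope c p x * x \<le> 2 * c * p"
    and "1 - c - 5 * c * p \<le> 1 - (1 + x) * weight c p x + weight_slope c p x * (x - x^2)"
proof -
  have z: "1 \<le> x + 1" using x by simp
  note slope = ln_ratio'_bounds[OF p, of "x + 1"] and est = ln_ratio_tangent_estimates[OF p z]
    and quadratic = ln_ratio'_quadratic_estimate[OF p z]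
  show "weight_slope c p x \<le> 0"
    using slope(1) c z by (simp add: weight_slope_def mult_nonneg_nonpos)
  show "- weight_slope c p x \<le> c * p^2"
    using mult_left_mono[OF slope(2) c] z by (simp add: weight_slope_def)
  have "weight c p x + weight_slope c p x * x
      = c * (ln_ratio p (x + 1) + ln_ratio' p (x + 1) * ((x + 1) - 1))"
    by (simp add: weight_def weight_slope_def algebra_simps)
  then show "0 \<le> weight c p x + weight_slope c p x * x"
    and "weight c p x + weight_slope c p x * x \<le> 2 * c * p"
    using est(1) mult_left_mono[OF est(2) c] c by simp_all
  have "1 - (1 + x) * weight c p x + weight_slope c p x * (x - x^2)
      = 1 - c * (ln (1 + p * (x + 1)) - ln_ratio' p (x + 1) * (((x + 1) - 1) * (2 - (x + 1))))"
    using x by (simp add: weight_def weight_slope_def ln_ratio_def field_simps power2_eq_square)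
  then show "1 - c - 5 * c * p \<le> 1 - (1 + x) * weight c p x + weight_slope c p x * (x - x^2)"
    using mult_left_mono[OF quadratic c] by (simp add: algebra_simps)
qed

lemma weight_slack_nonneg:
  assumes p: "0 < p" and c: "0 \<le> c" and x: "0 \<le> x" and K: "0 < K" and \<tau>: "0 \<le> \<tau>"
    and few: "3 * K * \<tau> \<le> weight c p x + weight_slope c p x * x"
    and key: "2 * c^2 * p^3 \<le> 3 * K * (1 - c - 5 * c * p)"
  shows "0 \<le> 1 - (1 + x) * weight c p x + weight_slope c p x * (x - x^2) + (weight_slope c p x + 3 * K) * \<tau>"
proof -
  let ?h = "weight c p x" and ?s = "weight_slope c p x"
  note est = weight_estimates[OF p c x]
  have "- ?s * (3 * K * \<tau>) \<le> - ?s * (?h + ?s * x)"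
    using few est(1) by (intro mult_left_mono) auto
  also have "\<dots> \<le> (c * p^2) * (2 * c * p)"
    using est(1-4) by (intro mult_mono) auto
  also have "\<dots> = 2 * c^2 * p^3"
    by (simp add: power2_eq_square power3_eq_cube)
  also have "\<dots> \<le> 3 * K * (1 - c - 5 * c * p)"
    by (rule key)
  finally have "(3 * K) * (- ?s * \<tau>) \<le> (3 * K) * (1 - c - 5 * c * p)"
    by (simp add: mult_ac)
  then have "- ?s * \<tau> \<le> 1 - c - 5 * c * p"
    by (rule mult_left_le_imp_le) (use K in simp)
  moreover have "0 \<le> 3 * K * \<tau>" using K \<tau> by simp
  ultimately show ?thesis using est(5) by (simp add: distrib_right)
qed

definition degree_in :: "('a \<Rightarrow> 'a \<Rightarrow> bool) \<Rightarrow> 'a set \<Rightarrow> 'a \<Rightarrow> real" where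
  "degree_in E A a = (\<Sum>b\<in>A. of_bool (E a b))"

definition degree_sum :: "('a \<Rightarrow> 'a \<Rightarrow> bool) \<Rightarrow> 'a set \<Rightarrow> real" where
  "degree_sum E A = (\<Sum>a\<in>A. degree_in E A a)"

definition ordered_triangles :: "('a \<Rightarrow> 'a \<Rightarrow> bool) \<Rightarrow> 'a set \<Rightarrow> real" where
  "ordered_triangles E A = (\<Sum>a\<in>A. \<Sum>b\<in>A. \<Sum>c\<in>A. of_bool (E a b \<and> E b c \<and> E a c))"

definition non_neighbours :: "('a \<Rightarrow> 'a \<Rightarrow> bool) \<Rightarrow> 'a set \<Rightarrow> 'a \<Rightarrow> 'a set" where
  "non_neighbours E A v = {u \<in> A. u \<noteq> v \<and> \<not> E v u}"

lemma degree_sum_nonneg: "0 \<le> degree_sum E A"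
  unfolding degree_sum_def degree_in_def by (intro sum_nonneg) auto

lemma ordered_triangles_nonneg: "0 \<le> ordered_triangles E A"
  unfolding ordered_triangles_def by (intro sum_nonneg) auto

lemma degree_sum_eq: "degree_sum E A = (\<Sum>a\<in>A. \<Sum>b\<in>A. of_bool (E a b))"
  unfolding degree_sum_def degree_in_def ..

lemma degree_in_eq_card:
  assumes "finite A"
  shows "degree_in E A a = real (card {b \<in> A. E a b})"
proof -
  have "A \<inter> {b. E a b} = {b \<in> A. E a b}" by auto
  then show ?thesis unfolding degree_in_def using assms by simp
qed

lemma sum_indicator_subset:
  fixes f :: "'a \<Rightarrow> real"
  assumes "finite A" "B \<subseteq> A"
  shows "(\<Sum>x\<in>A. of_bool (x \<in> B) * f x) = sum f B"
  using sum_of_bool_mult_eq[OF assms(1), of "\<lambda>x. x \<in> B" f] assms(2)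
  by (simp add: Int_absorb1)

lemma degree_sum_subset:
  assumes "finite A" "B \<subseteq> A"
  shows "degree_sum E B = (\<Sum>a\<in>A. \<Sum>b\<in>A. of_bool (a \<in> B \<and> b \<in> B \<and> E a b))"
proof -
  have "(\<Sum>a\<in>A. \<Sum>b\<in>A. of_bool (a \<in> B \<and> b \<in> B \<and> E a b))
      = (\<Sum>a\<in>A. of_bool (a \<in> B) * (\<Sum>b\<in>A. of_bool (b \<in> B) * (of_bool (E a b) :: real)))"
    by (simp add: of_bool_conj sum_distrib_left del: sum_of_bool_eq sum_of_bool_mult_eq sum_mult_of_bool_eq)
  also have "\<dots> = degree_sum E B"
    by (simp only: sum_indicator_subset[OF assms] degree_sum_eq)
  finally show ?thesis ..
qed

lemma ordered_triangles_subset: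
  assumes "finite A" "B \<subseteq> A"
  shows "ordered_triangles E B
    = (\<Sum>a\<in>A. \<Sum>b\<in>A. \<Sum>c\<in>A. of_bool (a \<in> B \<and> b \<in> B \<and> c \<in> B \<and> E a b \<and> E b c \<and> E a c))"
proof -
  have "(\<Sum>a\<in>A. \<Sum>b\<in>A. \<Sum>c\<in>A. of_bool (a \<in> B \<and> b \<in> B \<and> c \<in> B \<and> E a b \<and> E b c \<and> E a c))
      = (\<Sum>a\<in>A. of_bool (a \<in> B) * (\<Sum>b\<in>A. of_bool (b \<in> B) * (\<Sum>c\<in>A. of_bool (c \<in> B)
          * (of_bool (E a b \<and> E b c \<and> E a c) :: real))))"
    by (simp add: of_bool_conj sum_distrib_left mult.assoc
        del: sum_of_bool_eq sum_of_bool_mult_eq sum_mult_of_bool_eq)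
  also have "\<dots> = ordered_triangles E B"
    by (simp only: sum_indicator_subset[OF assms] ordered_triangles_def)
  finally show ?thesis ..
qed

lemma sum_swap_inside2:
  "(\<Sum>w\<in>W. \<Sum>a\<in>A. \<Sum>b\<in>B. f w a b) = (\<Sum>a\<in>A. \<Sum>b\<in>B. \<Sum>w\<in>W. f w a b)"
  by (simp add: sum.swap[of _ W])

lemma sum_swap_inside3:
  "(\<Sum>w\<in>W. \<Sum>a\<in>A. \<Sum>b\<in>B. \<Sum>c\<in>C. f w a b c) = (\<Sum>a\<in>A. \<Sum>b\<in>B. \<Sum>c\<in>C. \<Sum>w\<in>W. f w a b c)"
  by (simp add: sum.swap[of _ W])

lemma sum_of_bool_notin:
  assumes "finite V" "S \<subseteq> V"
  shows "(\<Sum>w\<in>V. of_bool (w \<notin> S) :: real) = real (card V) - real (card S)"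
proof -
  have "V \<inter> {w. w \<notin> S} = V - S" by auto
  then have "(\<Sum>w\<in>V. of_bool (w \<notin> S) :: real) = real (card (V - S))" using assms(1) by simp
  also have "\<dots> = real (card V) - real (card S)"
    using assms by (simp add: card_Diff_subset card_mono of_nat_diff finite_subset)
  finally show ?thesis .
qed

lemma sum_degree_sum_delete:
  assumes fin: "finite V" and irrefl: "\<And>u. \<not> E u u"
  shows "(\<Sum>w\<in>V. degree_sum E (V - {w})) = (real (card V) - 2) * degree_sum E V"
proof -
  have "(\<Sum>w\<in>V. degree_sum E (V - {w}))
      = (\<Sum>a\<in>V. \<Sum>b\<in>V. \<Sum>w\<in>V. of_bool (a \<in> V - {w} \<and> b \<in> V - {w} \<and> E a b))"
    unfolding degree_sum_subset[OF fin Diff_subset] by (rule sum_swap_inside2)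
  also have "\<dots> = (\<Sum>a\<in>V. \<Sum>b\<in>V. (real (card V) - 2) * of_bool (E a b))"
  proof (intro sum.cong refl)
    fix a b assume ab: "a \<in> V" "b \<in> V"
    show "(\<Sum>w\<in>V. of_bool (a \<in> V - {w} \<and> b \<in> V - {w} \<and> E a b))
        = (real (card V) - 2) * of_bool (E a b)"
    proof (cases "E a b")
      case True
      then have "a \<noteq> b" using irrefl by auto
      have "(\<Sum>w\<in>V. of_bool (a \<in> V - {w} \<and> b \<in> V - {w} \<and> E a b) :: real)
          = (\<Sum>w\<in>V. of_bool (w \<notin> {a, b}))"
        using ab True by (intro sum.cong refl) (auto simp del: sum_of_bool_eq)
      also have "\<dots> = real (card V) - real (card {a, b})"
        using ab fin by (intro sum_of_bool_notin) auto
      finally show ?thesis using True \<open>a \<noteq> b\<close> by simp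
    qed (simp del: sum_of_bool_eq)
  qed
  also have "\<dots> = (real (card V) - 2) * degree_sum E V"
    unfolding degree_sum_eq by (simp add: sum_distrib_left del: sum_of_bool_eq)
  finally show ?thesis .
qed

lemma sum_ordered_triangles_delete:
  assumes fin: "finite V" and irrefl: "\<And>u. \<not> E u u"
  shows "(\<Sum>w\<in>V. ordered_triangles E (V - {w})) = (real (card V) - 3) * ordered_triangles E V"
proof -
  have "(\<Sum>w\<in>V. ordered_triangles E (V - {w})) = (\<Sum>a\<in>V. \<Sum>b\<in>V. \<Sum>c\<in>V. \<Sum>w\<in>V.
      of_bool (a \<in> V - {w} \<and> b \<in> V - {w} \<and> c \<in> V - {w} \<and> E a b \<and> E b c \<and> E a c))"
    unfolding ordered_triangles_subset[OF fin Diff_subset] by (rule sum_swap_inside3)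
  also have "\<dots> = (\<Sum>a\<in>V. \<Sum>b\<in>V. \<Sum>c\<in>V. (real (card V) - 3) * of_bool (E a b \<and> E b c \<and> E a c))"
  proof (intro sum.cong refl)
    fix a b c assume abc: "a \<in> V" "b \<in> V" "c \<in> V"
    show "(\<Sum>w\<in>V. of_bool (a \<in> V - {w} \<and> b \<in> V - {w} \<and> c \<in> V - {w} \<and> E a b \<and> E b c \<and> E a c))
       = (real (card V) - 3) * of_bool (E a b \<and> E b c \<and> E a c)"
    proof (cases "E a b \<and> E b c \<and> E a c")
      case True
      then have distinct: "a \<noteq> b" "b \<noteq> c" "a \<noteq> c" using irrefl by auto
      have "(\<Sum>w\<in>V. of_bool (a \<in> V - {w} \<and> b \<in> V - {w} \<and> c \<in> V - {w} \<and> E a b \<and> E b c \<and> E a c) :: real)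
          = (\<Sum>w\<in>V. of_bool (w \<notin> {a, b, c}))"
        using abc True by (intro sum.cong refl) (auto simp del: sum_of_bool_eq)
      also have "\<dots> = real (card V) - real (card {a, b, c})"
        using abc fin by (intro sum_of_bool_notin) auto
      finally show ?thesis using True distinct by simp
    next
      case False
      then have "\<And>w. (of_bool (a \<in> V - {w} \<and> b \<in> V - {w} \<and> c \<in> V - {w}
          \<and> E a b \<and> E b c \<and> E a c) :: real) = 0"
        by auto
      with False show ?thesis by (simp only: sum.neutral_const) simp
    qed
  qed
  also have "\<dots> = (real (card V) - 3) * ordered_triangles E V"
    unfolding ordered_triangles_def by (simp add: sum_distrib_left del: sum_of_bool_eq)
  finally show ?thesis .
qed

lemma ordered_triangles_mono:
  assumes "finite C" "B \<subseteq> C"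
  shows "ordered_triangles E B \<le> ordered_triangles E C"
proof -
  have "ordered_triangles E B = (\<Sum>a\<in>C. \<Sum>b\<in>C. \<Sum>c\<in>C.
      of_bool (a \<in> B \<and> b \<in> B \<and> c \<in> B \<and> E a b \<and> E b c \<and> E a c))"
    using assms by (rule ordered_triangles_subset)
  also have "\<dots> \<le> ordered_triangles E C"
    unfolding ordered_triangles_def using assms(2)
    by (intro sum_mono) (auto simp del: sum_of_bool_eq of_bool_conj)
  finally show ?thesis .
qed

lemma card_non_neighbours:
  assumes fin: "finite V" and irrefl: "\<And>u. \<not> E u u" and v: "v \<in> V"
  shows "real (card (non_neighbours E V v)) = real (card V) - 1 - degree_in E V v"
proof -
  let ?N = "insert v {b \<in> V. E v b}"
  have "non_neighbours E V v = V - ?N" unfolding non_neighbours_def by auto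
  moreover have "?N \<subseteq> V" using v by auto
  moreover have "card ?N = 1 + card {b \<in> V. E v b}" using fin irrefl by simp
  ultimately show ?thesis
    using fin degree_in_eq_card[OF fin, of E v] card_mono[OF fin \<open>?N \<subseteq> V\<close>]
    by (simp add: card_Diff_subset finite_subset of_nat_diff)
qed

lemma sum_of_bool_common_non_neighbour:
  assumes fin: "finite V" and sym: "\<And>u v. E u v \<Longrightarrow> E v u" and irrefl: "\<And>u. \<not> E u u"
    and ab: "a \<in> V" "b \<in> V" "E a b"
  shows "(\<Sum>v\<in>V. of_bool (a \<in> non_neighbours E V v \<and> b \<in> non_neighbours E V v))
    = real (card V) - degree_in E V a - degree_in E V b + (\<Sum>c\<in>V. of_bool (E a c \<and> E b c))"
proof -
  define Na where "Na = insert a {c \<in> V. E a c}"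
  define Nb where "Nb = insert b {c \<in> V. E b c}"
  have "a \<noteq> b" using ab irrefl by auto
  have sub: "Na \<subseteq> V" "Nb \<subseteq> V" using ab by (auto simp: Na_def Nb_def)
  then have fin_N: "finite Na" "finite Nb" using fin finite_subset by auto
  have "(\<Sum>v\<in>V. of_bool (a \<in> non_neighbours E V v \<and> b \<in> non_neighbours E V v) :: real)
      = (\<Sum>v\<in>V. of_bool (v \<notin> Na \<union> Nb))"
    using ab sym by (intro sum.cong refl) (auto simp: non_neighbours_def Na_def Nb_def simp del: sum_of_bool_eq)
  also have "\<dots> = real (card V) - real (card (Na \<union> Nb))"
    using fin sub by (intro sum_of_bool_notin) auto
  also have "real (card (Na \<union> Nb)) = real (card Na) + real (card Nb) - real (card (Na \<inter> Nb))"
    using card_Un_Int[OF fin_N] by simp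
  also have "real (card Na) = 1 + degree_in E V a" using irrefl fin by (simp add: Na_def degree_in_eq_card)
  also have "real (card Nb) = 1 + degree_in E V b" using irrefl fin by (simp add: Nb_def degree_in_eq_card)
  also have "Na \<inter> Nb = insert a (insert b {c \<in> V. E a c \<and> E b c})"
    using ab sym by (auto simp: Na_def Nb_def)
  also have "real (card \<dots>) = 2 + (\<Sum>c\<in>V. of_bool (E a c \<and> E b c))"
    using ab irrefl fin \<open>a \<noteq> b\<close> by (simp add: Int_def Collect_conj_eq[symmetric])
  finally show ?thesis by simp
qed

lemma sum_degree_sum_non_neighbours:
  assumes fin: "finite V" and sym: "\<And>u v. E u v \<Longrightarrow> E v u" and irrefl: "\<And>u. \<not> E u u"
  shows "(\<Sum>v\<in>V. degree_sum E (non_neighbours E V v))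
    = real (card V) * degree_sum E V - 2 * (\<Sum>a\<in>V. (degree_in E V a)^2) + ordered_triangles E V"
proof -
  let ?n = "real (card V)" and ?d = "degree_in E V"
  have sub: "non_neighbours E V v \<subseteq> V" for v by (auto simp: non_neighbours_def)
  have "(\<Sum>v\<in>V. degree_sum E (non_neighbours E V v)) = (\<Sum>a\<in>V. \<Sum>b\<in>V. \<Sum>v\<in>V.
      of_bool (a \<in> non_neighbours E V v \<and> b \<in> non_neighbours E V v \<and> E a b))"
    unfolding degree_sum_subset[OF fin sub] by (rule sum_swap_inside2)
  also have "\<dots> = (\<Sum>a\<in>V. \<Sum>b\<in>V. of_bool (E a b) * ?n - of_bool (E a b) * ?d a
      - of_bool (E b a) * ?d b + (\<Sum>c\<in>V. of_bool (E a b \<and> E b c \<and> E a c)))"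
  proof (intro sum.cong refl)
    fix a b assume "a \<in> V" "b \<in> V"
    then show "(\<Sum>v\<in>V. of_bool (a \<in> non_neighbours E V v \<and> b \<in> non_neighbours E V v \<and> E a b))
      = of_bool (E a b) * ?n - of_bool (E a b) * ?d a - of_bool (E b a) * ?d b
        + (\<Sum>c\<in>V. of_bool (E a b \<and> E b c \<and> E a c))"
      using sum_of_bool_common_non_neighbour[where E = E and a = a and b = b, OF fin sym irrefl] sym[of a b] sym[of b a]
      by (cases "E a b") (auto simp: conj_commute simp del: sum_of_bool_eq)
  qed
  also have "\<dots> = ?n * (\<Sum>a\<in>V. \<Sum>b\<in>V. of_bool (E a b)) - (\<Sum>a\<in>V. \<Sum>b\<in>V. of_bool (E a b) * ?d a)
      - (\<Sum>a\<in>V. \<Sum>b\<in>V. of_bool (E b a) * ?d b) + ordered_triangles E V"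
    by (simp add: sum.distrib sum_subtractf sum_distrib_left ordered_triangles_def mult.commute
        del: sum_of_bool_eq sum_of_bool_mult_eq sum_mult_of_bool_eq)
  also have "(\<Sum>a\<in>V. \<Sum>b\<in>V. of_bool (E b a) * ?d b) = (\<Sum>a\<in>V. \<Sum>b\<in>V. of_bool (E a b) * ?d a)"
    by (rule sum.swap)
  also have "(\<Sum>a\<in>V. \<Sum>b\<in>V. of_bool (E a b) * ?d a) = (\<Sum>a\<in>V. (?d a)^2)"
    by (simp add: degree_in_def sum_distrib_right power2_eq_square
        del: sum_of_bool_eq sum_of_bool_mult_eq sum_mult_of_bool_eq)
  finally show ?thesis by (simp add: degree_sum_eq)
qed

lemma sum_card_non_neighbours:
  assumes fin: "finite V" and irrefl: "\<And>u. \<not> E u u"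
  shows "(\<Sum>v\<in>V. real (card (non_neighbours E V v)))
    = real (card V) * real (card V) - real (card V) - degree_sum E V"
proof -
  have "(\<Sum>v\<in>V. real (card (non_neighbours E V v))) = (\<Sum>v\<in>V. real (card V) - 1 - degree_in E V v)"
    by (intro sum.cong refl) (rule card_non_neighbours[of V E, OF fin irrefl])
  then show ?thesis by (simp add: sum_subtractf degree_sum_def right_diff_distrib)
qed

lemma sum_degree_sum_non_neighbours_le:
  assumes fin: "finite V" and sym: "\<And>u v. E u v \<Longrightarrow> E v u" and irrefl: "\<And>u. \<not> E u u"
  shows "(\<Sum>v\<in>V. degree_sum E (non_neighbours E V v))
    \<le> real (card V) * degree_sum E V - 2 * (degree_sum E V^2 / real (card V)) + ordered_triangles E V"
proof -
  have "degree_sum E V^2 / real (card V) \<le> (\<Sum>a\<in>V. (degree_in E V a)^2)"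
    using sum_squared_le_sum_of_squares[of "degree_in E V" V]
    using fin by (cases "V = {}") (auto simp: degree_sum_def divide_le_eq mult.commute)
  then show ?thesis
    using sum_degree_sum_non_neighbours[of V E, OF fin sym irrefl] by linarith
qed

lemma sum_ordered_triangles_non_neighbours_le:
  assumes fin: "finite V" and irrefl: "\<And>u. \<not> E u u"
  shows "(\<Sum>v\<in>V. ordered_triangles E (non_neighbours E V v)) \<le> (real (card V) - 3) * ordered_triangles E V"
proof -
  have "(\<Sum>v\<in>V. ordered_triangles E (non_neighbours E V v)) \<le> (\<Sum>v\<in>V. ordered_triangles E (V - {v}))"
    using fin by (intro sum_mono ordered_triangles_mono) (auto simp: non_neighbours_def)
  then show ?thesis unfolding sum_ordered_triangles_delete[of V E, OF fin irrefl] .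
qed

definition potential :: "real \<Rightarrow> real \<Rightarrow> real \<Rightarrow> ('a \<Rightarrow> 'a \<Rightarrow> bool) \<Rightarrow> 'a set \<Rightarrow> real" where
  "potential c p K E A
    = real (card A) * weight c p (degree_sum E A / real (card A)) - K * ordered_triangles E A"

lemma exists_ge_average:
  fixes f :: "'a \<Rightarrow> real"
  assumes "finite A" "A \<noteq> {}" "real (card A) * t \<le> (\<Sum>a\<in>A. f a)"
  shows "\<exists>a\<in>A. t \<le> f a"
  using sum_bounded_above_strict[of A f t] assms by (force simp: card_gt_0_iff)

lemma sum_affine2:
  fixes f g :: "'a \<Rightarrow> real"
  shows "(\<Sum>w\<in>V. a + b * f w - k * g w) = real (card V) * a + b * sum f V - k * sum g V"
  by (simp add: sum.distrib sum_subtractf sum_distrib_left)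

lemma sum_affine3:
  fixes f g h :: "'a \<Rightarrow> real"
  shows "(\<Sum>v\<in>V. a + b * f v + c * g v - k * h v)
    = real (card V) * a + b * sum f V + c * sum g V - k * sum h V"
  by (simp add: sum.distrib sum_subtractf sum_distrib_left)

lemma potential_le_tangent_bound:
  assumes fin: "finite A" and p: "0 < p" and c: "0 \<le> c" and x: "0 \<le> x"
  shows "real (card A) * weight c p x + weight_slope c p x * (degree_sum E A - real (card A) * x)
      - K * ordered_triangles E A \<le> potential c p K E A"
proof -
  have "degree_sum E A = 0" if "card A = 0"
    using that fin by (simp add: degree_sum_def)
  then show ?thesis
    unfolding potential_def
    using weight_above_tangent_scaled[OF p c x, of "real (card A)" "degree_sum E A"]
    by (simp add: degree_sum_nonneg)
qed

lemma sum_potential_delete_vertex_ge: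
  assumes fin: "finite V" and irrefl: "\<And>u. \<not> E u u" and p: "0 < p" and c: "0 \<le> c" and x: "0 \<le> x"
  defines "n \<equiv> real (card V)" and "h \<equiv> weight c p x" and "s \<equiv> weight_slope c p x"
  shows "n * ((n - 1) * h - s * (n - 1) * x) + s * ((n - 2) * degree_sum E V)
      - K * ((n - 3) * ordered_triangles E V) \<le> (\<Sum>w\<in>V. potential c p K E (V - {w}))"
proof -
  have card_delete: "real (card (V - {w})) = n - 1" if "w \<in> V" for w
  proof -
    have "0 < card V" using that fin card_gt_0_iff by blast
    then show ?thesis using that fin by (simp add: n_def of_nat_diff)
  qed
  have "n * ((n - 1) * h - s * (n - 1) * x) + s * ((n - 2) * degree_sum E V)
      - K * ((n - 3) * ordered_triangles E V)
      = (\<Sum>w\<in>V. ((n - 1) * h - s * (n - 1) * x) + s * degree_sum E (V - {w})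
        - K * ordered_triangles E (V - {w}))"
    unfolding sum_affine2 sum_degree_sum_delete[of V E, OF fin irrefl]
      sum_ordered_triangles_delete[of V E, OF fin irrefl] n_def ..
  also have "\<dots> \<le> (\<Sum>w\<in>V. potential c p K E (V - {w}))"
  proof (rule sum_mono)
    fix w assume w: "w \<in> V"
    show "(n - 1) * h - s * (n - 1) * x + s * degree_sum E (V - {w}) - K * ordered_triangles E (V - {w})
        \<le> potential c p K E (V - {w})"
      using potential_le_tangent_bound[of "V - {w}", OF _ p c x, unfolded card_delete[OF w]] fin
      by (simp add: h_def s_def algebra_simps)
  qed
  finally show ?thesis .
qed

lemma exists_delete_vertex_potential_ge:
  assumes fin: "finite V" and ne: "V \<noteq> {}" and irrefl: "\<And>u. \<not> E u u"
    and p: "0 < p" and c: "0 \<le> c"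
  defines "x \<equiv> degree_sum E V / real (card V)"
  assumes many: "weight c p x + weight_slope c p x * x \<le> 3 * K * (ordered_triangles E V / real (card V))"
  shows "\<exists>w\<in>V. potential c p K E V \<le> potential c p K E (V - {w})"
proof (rule exists_ge_average[OF fin ne])
  let ?n = "real (card V)" and ?D = "degree_sum E V" and ?T = "ordered_triangles E V"
  let ?h = "weight c p x" and ?s = "weight_slope c p x"
  have n: "0 < ?n" using fin ne by (simp add: card_gt_0_iff)
  have x: "0 \<le> x" unfolding x_def using degree_sum_nonneg[of E V] by simp
  have "?n * (?h + ?s * x) \<le> ?n * (3 * K * (?T / ?n))"
    using many n by (intro mult_left_mono) auto
  then have "?n * potential c p K E V \<le> ?n * potential c p K E V + (3 * K * ?T - ?n * (?h + ?s * x))"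
    using n by simp
  also have "\<dots> = ?n * ((?n - 1) * ?h - ?s * (?n - 1) * x) + ?s * ((?n - 2) * ?D) - K * ((?n - 3) * ?T)"
    using n by (simp add: potential_def x_def algebra_simps)
  also have "\<dots> \<le> (\<Sum>w\<in>V. potential c p K E (V - {w}))"
    using sum_potential_delete_vertex_ge[OF fin irrefl p c x] .
  finally show "?n * potential c p K E V \<le> (\<Sum>w\<in>V. potential c p K E (V - {w}))" .
qed

lemma sum_potential_non_neighbours_ge:
  assumes fin: "finite V" and sym: "\<And>u v. E u v \<Longrightarrow> E v u" and irrefl: "\<And>u. \<not> E u u"
    and p: "0 < p" and c: "0 \<le> c" and x: "0 \<le> x" and K: "0 \<le> K"
  defines "n \<equiv> real (card V)" and "D \<equiv> degree_sum E V" and "T \<equiv> ordered_triangles E V"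
    and "h \<equiv> weight c p x" and "s \<equiv> weight_slope c p x"
  shows "n + (h - s * x) * (n * n - n - D) + s * (n * D - 2 * (D^2 / n) + T) - K * ((n - 3) * T)
    \<le> (\<Sum>v\<in>V. 1 + potential c p K E (non_neighbours E V v))"
proof -
  let ?N = "non_neighbours E V" and ?m = "\<lambda>v. real (card (non_neighbours E V v))"
  have "s * (n * D - 2 * (D^2 / n) + T) \<le> s * (\<Sum>v\<in>V. degree_sum E (?N v))"
    using sum_degree_sum_non_neighbours_le[of V E, OF fin sym irrefl] weight_estimates(1)[OF p c x]
    unfolding n_def D_def T_def s_def by (rule mult_left_mono_neg)
  moreover have "K * (\<Sum>v\<in>V. ordered_triangles E (?N v)) \<le> K * ((n - 3) * T)"
    using sum_ordered_triangles_non_neighbours_le[of V E, OF fin irrefl] K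
    unfolding n_def T_def by (rule mult_left_mono)
  ultimately have "n + (h - s * x) * (n * n - n - D) + s * (n * D - 2 * (D^2 / n) + T) - K * ((n - 3) * T)
      \<le> (\<Sum>v\<in>V. 1 + (h - s * x) * ?m v + s * degree_sum E (?N v) - K * ordered_triangles E (?N v))"
    unfolding sum_affine3 sum_card_non_neighbours[of V E, OF fin irrefl] n_def D_def by linarith
  also have "\<dots> \<le> (\<Sum>v\<in>V. 1 + potential c p K E (?N v))"
  proof (rule sum_mono)
    fix v assume "v \<in> V"
    have "finite (?N v)" using fin by (simp add: non_neighbours_def)
    then show "1 + (h - s * x) * ?m v + s * degree_sum E (?N v) - K * ordered_triangles E (?N v)
        \<le> 1 + potential c p K E (?N v)"
      using potential_le_tangent_bound[of "?N v", OF _ p c x] by (simp add: h_def s_def algebra_simps)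
  qed
  finally show ?thesis .
qed

lemma exists_non_neighbours_potential_ge:
  assumes fin: "finite V" and ne: "V \<noteq> {}"
    and sym: "\<And>u v. E u v \<Longrightarrow> E v u" and irrefl: "\<And>u. \<not> E u u"
    and p: "0 < p" and c: "0 \<le> c" and K: "0 < K"
  defines "x \<equiv> degree_sum E V / real (card V)"
  assumes few: "3 * K * (ordered_triangles E V / real (card V)) \<le> weight c p x + weight_slope c p x * x"
    and key: "2 * c^2 * p^3 \<le> 3 * K * (1 - c - 5 * c * p)"
  shows "\<exists>v\<in>V. potential c p K E V \<le> 1 + potential c p K E (non_neighbours E V v)"
proof (rule exists_ge_average[OF fin ne])
  let ?n = "real (card V)" and ?D = "degree_sum E V" and ?T = "ordered_triangles E V"
  let ?h = "weight c p x" and ?s = "weight_slope c p x"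
  define \<tau> where "\<tau> = ?T / ?n"
  have n: "0 < ?n" using fin ne by (simp add: card_gt_0_iff)
  have x: "0 \<le> x" unfolding x_def using degree_sum_nonneg[of E V] by simp
  have \<tau>: "0 \<le> \<tau>" unfolding \<tau>_def using ordered_triangles_nonneg[of E V] by simp
  have Dx: "?D = ?n * x" and T\<tau>: "?T = ?n * \<tau>" using n by (simp_all add: x_def \<tau>_def)
  have "0 \<le> 1 - (1 + x) * ?h + ?s * (x - x^2) + (?s + 3 * K) * \<tau>"
    using weight_slack_nonneg[OF p c x K \<tau> few[folded \<tau>_def] key] .
  then have "?n * potential c p K E V
      \<le> ?n * potential c p K E V + ?n * (1 - (1 + x) * ?h + ?s * (x - x^2) + (?s + 3 * K) * \<tau>)"
    using n by simp
  also have "\<dots> = ?n + (?h - ?s * x) * (?n * ?n - ?n - ?D)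
      + ?s * (?n * ?D - 2 * (?D^2 / ?n) + ?T) - K * ((?n - 3) * ?T)"
    unfolding potential_def x_def[symmetric] Dx T\<tau> using n by (simp add: algebra_simps power2_eq_square)
  also have "\<dots> \<le> (\<Sum>v\<in>V. 1 + potential c p K E (non_neighbours E V v))"
    using sum_potential_non_neighbours_ge[where E = E and K = K, OF fin sym irrefl p c x] K by simp
  finally show "?n * potential c p K E V \<le> (\<Sum>v\<in>V. 1 + potential c p K E (non_neighbours E V v))" .
qed

lemma independent_set_insert_non_neighbours:
  assumes fin: "finite V" and sym: "\<And>u v. E u v \<Longrightarrow> E v u" and irrefl: "\<And>u. \<not> E u u"
    and v: "v \<in> V" and S: "independent_set (non_neighbours E V v) E S"
  shows "independent_set V E (insert v S)" and "card (insert v S) = Suc (card S)"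
proof -
  have S_sub: "S \<subseteq> V - {v}" and "\<forall>u\<in>S. \<forall>w\<in>S. \<not> E u w" and "\<forall>u\<in>S. \<not> E v u \<and> \<not> E u v"
    using S sym unfolding independent_set_def non_neighbours_def by auto
  then show "independent_set V E (insert v S)" using v irrefl unfolding independent_set_def by auto
  from S_sub have "finite S" "v \<notin> S" using fin finite_subset by auto
  then show "card (insert v S) = Suc (card S)" by simp
qed

lemma independent_set_ge_potential:
  assumes sym: "\<And>u v. E u v \<Longrightarrow> E v u" and irrefl: "\<And>u. \<not> E u u"
    and p: "0 < p" and c: "0 \<le> c" and K: "0 < K"
    and key: "2 * c^2 * p^3 \<le> 3 * K * (1 - c - 5 * c * p)"
    and fin: "finite V"
  shows "\<exists>S. independent_set V E S \<and> potential c p K E V \<le> real (card S)"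
  using fin
proof (induction "card V" arbitrary: V rule: less_induct)
  case less
  show ?case
  proof (cases "V = {}")
    case True
    have "potential c p K E {} = 0" by (simp add: potential_def ordered_triangles_def)
    then show ?thesis unfolding True by (intro exI[of _ "{}"]) (simp add: independent_set_def)
  next
    case False
    let ?x = "degree_sum E V / real (card V)" and ?\<tau> = "ordered_triangles E V / real (card V)"
    consider (many) "weight c p ?x + weight_slope c p ?x * ?x \<le> 3 * K * ?\<tau>"
      | (few) "3 * K * ?\<tau> \<le> weight c p ?x + weight_slope c p ?x * ?x" by linarith
    then show ?thesis
    proof cases
      case many
      then obtain w where w: "w \<in> V" and le: "potential c p K E V \<le> potential c p K E (V - {w})"
        using exists_delete_vertex_potential_ge[where E = E and K = K, OF less.prems False irrefl p c] by blast
      moreover obtain S where "independent_set (V - {w}) E S" "potential c p K E (V - {w}) \<le> real (card S)"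
        using less.hyps[of "V - {w}"] less.prems w by (meson card_Diff1_less finite_Diff)
      ultimately show ?thesis unfolding independent_set_def by (meson Diff_subset order.trans)
    next
      case few
      then obtain v where v: "v \<in> V"
        and le: "potential c p K E V \<le> 1 + potential c p K E (non_neighbours E V v)"
        using exists_non_neighbours_potential_ge[where E = E, OF less.prems False sym irrefl p c K _ key]
        by blast
      have "non_neighbours E V v \<subset> V" using v by (auto simp: non_neighbours_def)
      then obtain S where S: "independent_set (non_neighbours E V v) E S"
        and S_le: "potential c p K E (non_neighbours E V v) \<le> real (card S)"
        using less.hyps[of "non_neighbours E V v"] less.prems
        by (meson finite_subset psubset_card_mono psubset_imp_subset)
      show ?thesis
        using independent_set_insert_non_neighbours[OF less.prems sym irrefl v S] le S_le
        by (intro exI[of _ "insert v S"]) simp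
    qed
  qed
qed

lemma finite_edge_set: "finite V \<Longrightarrow> finite (edge_set V E)"
  by (rule finite_subset[of _ "Pow V"]) (auto simp: edge_set_def)

lemma finite_triangles: "finite V \<Longrightarrow> finite (triangles V E)"
  by (rule finite_subset[of _ "Pow V"]) (auto simp: triangles_def)

lemma card_le_mult_card_image:
  assumes "finite A" "\<And>y. y \<in> f ` A \<Longrightarrow> card {x \<in> A. f x = y} \<le> k"
  shows "card A \<le> k * card (f ` A)"
proof -
  have "card A = card (\<Union>y\<in>f ` A. {x \<in> A. f x = y})" by (rule arg_cong[where f = card]) auto
  also have "\<dots> \<le> (\<Sum>y\<in>f ` A. card {x \<in> A. f x = y})" using assms(1) by (intro card_UN_le) auto
  also have "\<dots> \<le> (\<Sum>y\<in>f ` A. k)" using assms(2) by (rule sum_mono)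
  finally show ?thesis by (simp add: mult.commute)
qed

lemma degree_sum_eq_card:
  assumes "finite V"
  shows "degree_sum E V = real (card {(a, b). a \<in> V \<and> b \<in> V \<and> E a b})"
proof -
  have "(V \<times> V) \<inter> {x. case x of (a, b) \<Rightarrow> E a b} = {(a, b). a \<in> V \<and> b \<in> V \<and> E a b}" by auto
  then show ?thesis
    using assms by (simp add: degree_sum_eq sum.cartesian_product del: sum_of_bool_eq)
      (simp add: case_prod_unfold)
qed

lemma ordered_triangles_eq_card:
  assumes "finite V"
  shows "ordered_triangles E V
    = real (card {(a, b, c). a \<in> V \<and> b \<in> V \<and> c \<in> V \<and> E a b \<and> E b c \<and> E a c})"
proof -
  have "(V \<times> V \<times> V) \<inter> {x. case x of (a, b, c) \<Rightarrow> E a b \<and> E b c \<and> E a c}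
      = {(a, b, c). a \<in> V \<and> b \<in> V \<and> c \<in> V \<and> E a b \<and> E b c \<and> E a c}" by auto
  then show ?thesis
    using assms by (simp add: ordered_triangles_def sum.cartesian_product del: sum_of_bool_eq)
      (simp add: case_prod_unfold)
qed

lemma degree_sum_le_card_edge_set:
  assumes G: "simple_graph V E"
  shows "degree_sum E V \<le> 2 * real (card (edge_set V E))"
proof -
  let ?P = "{(a, b). a \<in> V \<and> b \<in> V \<and> E a b}" and ?e = "\<lambda>(a, b). {a, b}"
  have fin: "finite V" using G by (simp add: simple_graph_def)
  have "?P \<subseteq> V \<times> V" by auto
  then have "finite ?P" using fin by (blast intro: finite_subset)
  moreover have "card {x \<in> ?P. ?e x = y} \<le> 2" if y: "y \<in> ?e ` ?P" for y
  proof -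
    obtain u v where "y = {u, v}" using y by auto
    then have "{x \<in> ?P. ?e x = y} \<subseteq> {(u, v), (v, u)}" by (clarsimp simp: doubleton_eq_iff)
    then have "card {x \<in> ?P. ?e x = y} \<le> card {(u, v), (v, u)}" by (intro card_mono) auto
    also have "\<dots> \<le> 2" by (rule order_trans[OF card_insert_le_m1]) auto
    finally show ?thesis .
  qed
  ultimately have "card ?P \<le> 2 * card (?e ` ?P)" by (rule card_le_mult_card_image)
  also have "card (?e ` ?P) \<le> card (edge_set V E)"
    by (intro card_mono finite_edge_set fin) (auto simp: edge_set_def)
  finally show ?thesis unfolding degree_sum_eq_card[OF fin] by linarith
qed

lemma ordered_triangles_le_card_triangles:
  assumes G: "simple_graph V E"
  shows "ordered_triangles E V \<le> 27 * real (card (triangles V E))"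
proof -
  let ?Q = "{(a, b, c). a \<in> V \<and> b \<in> V \<and> c \<in> V \<and> E a b \<and> E b c \<and> E a c}"
    and ?t = "\<lambda>(a, b, c). {a, b, c}"
  have fin: "finite V" and sym: "\<And>u v. E u v \<Longrightarrow> E v u" and irrefl: "\<And>u. \<not> E u u"
    using G by (auto simp: simple_graph_def)
  have "?Q \<subseteq> V \<times> V \<times> V" by auto
  then have fin_Q: "finite ?Q" using fin by (blast intro: finite_subset)
  have image: "?t ` ?Q \<subseteq> triangles V E"
  proof clarify
    fix a b c assume "a \<in> V" "b \<in> V" "c \<in> V" "E a b" "E b c" "E a c"
    moreover have "a \<noteq> b" "b \<noteq> c" "a \<noteq> c" using calculation irrefl by auto
    ultimately show "{a, b, c} \<in> triangles V E" using sym by (auto simp: triangles_def)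
  qed
  have "card {x \<in> ?Q. ?t x = t} \<le> 27" if t: "t \<in> ?t ` ?Q" for t
  proof -
    have t3: "card t = 3" using t image by (auto simp: triangles_def)
    then have "finite t" by (simp add: card_ge_0_finite)
    moreover have "{x \<in> ?Q. ?t x = t} \<subseteq> t \<times> t \<times> t" by auto
    ultimately have "card {x \<in> ?Q. ?t x = t} \<le> card (t \<times> t \<times> t)" by (intro card_mono) auto
    also have "\<dots> = 27" using t3 by (simp add: card_cartesian_product)
    finally show ?thesis .
  qed
  with fin_Q have "card ?Q \<le> 27 * card (?t ` ?Q)" by (rule card_le_mult_card_image)
  also have "card (?t ` ?Q) \<le> card (triangles V E)"
    using image by (intro card_mono finite_triangles fin)
  finally show ?thesis unfolding ordered_triangles_eq_card[OF fin] by linarith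
qed

lemma card_le_independence_number:
  assumes "finite V" "independent_set V E S"
  shows "card S \<le> independence_number V E"
proof -
  have "{card S | S. independent_set V E S} \<subseteq> {0..card V}"
    using assms(1) by (auto simp: independent_set_def intro: card_mono)
  then have "finite {card S | S. independent_set V E S}" by (rule finite_subset) simp
  then show ?thesis unfolding independence_number_def using assms(2) by (intro Max_ge) auto
qed

lemma potential_ge_weight_at_degree_bound:
  assumes G: "simple_graph V E" and ne: "V \<noteq> {}" and avg: "avg_degree V E \<le> d"
    and p: "0 < p" and c: "0 \<le> c"
  shows "real (card V) * weight c p d - K * ordered_triangles E V \<le> potential c p K E V"
proof -
  let ?n = "real (card V)"
  define x where "x = degree_sum E V / ?n"
  have n: "0 < ?n" using G ne by (simp add: simple_graph_def card_gt_0_iff)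
  have x: "0 \<le> x" unfolding x_def using degree_sum_nonneg[of E V] by simp
  have "x \<le> 2 * real (card (edge_set V E)) / ?n"
    unfolding x_def using degree_sum_le_card_edge_set[OF G] n by (simp add: divide_right_mono)
  then have xd: "x \<le> d" using avg by (simp add: avg_degree_def)
  have "weight c p d + weight_slope c p d * (x - d) \<le> weight c p x"
    using p c x xd by (intro weight_above_tangent) auto
  moreover have "0 \<le> weight_slope c p d * (x - d)"
    using weight_estimates(1)[OF p c, of d] x xd by (intro mult_nonpos_nonpos) auto
  ultimately have "?n * weight c p d \<le> ?n * weight c p x" using n by simp
  then show ?thesis unfolding potential_def x_def by simp
qed

lemma weight_lower_bound:
  assumes \<delta>: "0 < \<delta>" "\<delta> \<le> 1" and d: "1 / \<delta> \<le> d" and l: "0 < l" "ln (10 / \<delta>) \<le> ln l"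
  shows "(1 - \<delta>)^2 * (ln l - ln (10 / \<delta>)) / d \<le> weight (1 - \<delta>) (\<delta> * l / (10 * d)) d"
proof -
  define p where "p = \<delta> * l / (10 * d)"
  have "0 < 1 / \<delta>" using \<delta> by simp
  then have d0: "0 < d" using d by linarith
  have p0: "0 < p" using \<delta> l d0 by (simp add: p_def)
  have "(1 - \<delta>) * (d + 1) \<le> d"
    using d \<delta> by (simp add: divide_le_eq algebra_simps)
  then have q: "(1 - \<delta>) / d \<le> 1 / (d + 1)"
    using d0 by (simp add: field_simps)
  have "ln l - ln (10 / \<delta>) = ln (p * d)"
    using \<delta> l d0 by (simp add: p_def ln_div ln_mult)
  also have "\<dots> \<le> ln (1 + p * (d + 1))"
    using p0 d0 by (intro ln_mono) (auto simp: algebra_simps)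
  finally have ln_le: "ln l - ln (10 / \<delta>) \<le> ln (1 + p * (d + 1))" .
  have "(1 - \<delta>)^2 * (ln l - ln (10 / \<delta>)) / d = ((1 - \<delta>) * (ln l - ln (10 / \<delta>))) * ((1 - \<delta>) / d)"
    by (simp add: power2_eq_square)
  also have "\<dots> \<le> ((1 - \<delta>) * (ln l - ln (10 / \<delta>))) * (1 / (d + 1))"
    using q \<delta> l by (intro mult_left_mono) auto
  also have "\<dots> \<le> ((1 - \<delta>) * ln (1 + p * (d + 1))) * (1 / (d + 1))"
    using ln_le \<delta> d0 by (intro mult_right_mono mult_left_mono) auto
  also have "\<dots> = weight (1 - \<delta>) p d"
    by (simp add: weight_def ln_ratio_def)
  finally show ?thesis unfolding p_def .
qed

lemma key_condition:
  fixes \<delta> p :: real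
  assumes \<delta>: "0 < \<delta>" "\<delta> \<le> 1" and p: "0 < p" "p \<le> \<delta> / 10"
  shows "2 * (1 - \<delta>)^2 * p^3 \<le> 3 * (2 * p^3 / \<delta>) * (1 - (1 - \<delta>) - 5 * (1 - \<delta>) * p)"
proof -
  have "(1 - \<delta>)^2 \<le> 1" using \<delta> by (simp add: power_le_one)
  then have "2 * (1 - \<delta>)^2 * p^3 \<le> 3 * p^3" using p by simp
  also have "\<dots> = 3 * (2 * p^3 / \<delta>) * (\<delta> / 2)" using \<delta> by simp
  also have "\<dots> \<le> 3 * (2 * p^3 / \<delta>) * (1 - (1 - \<delta>) - 5 * (1 - \<delta>) * p)"
  proof -
    have "5 * (1 - \<delta>) * p \<le> 5 * 1 * (\<delta> / 10)" using \<delta> p by (intro mult_mono) auto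
    then show ?thesis using \<delta> p by (intro mult_left_mono) auto
  qed
  finally show ?thesis .
qed

lemma triangle_term_le:
  fixes \<delta> d l n T :: real
  assumes \<delta>: "0 < \<delta>" "\<delta> \<le> 1" and d: "0 < d" and l: "0 < l" and n: "0 \<le> n"
    and T: "T \<le> 27 * (d^2 * n / l^3)"
  shows "2 * (\<delta> * l / (10 * d))^3 / \<delta> * T \<le> n / d"
proof -
  have "2 * (\<delta> * l / (10 * d))^3 / \<delta> * T \<le> 2 * (\<delta> * l / (10 * d))^3 / \<delta> * (27 * (d^2 * n / l^3))"
    using T \<delta> d l by (intro mult_left_mono) auto
  also have "\<dots> = 54 * \<delta>^2 / 1000 * (n / d)"
    using d l \<delta> by (simp add: field_simps power2_eq_square power3_eq_cube)
  also have "\<dots> \<le> 1 * (n / d)"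
  proof (rule mult_right_mono)
    have "\<delta>^2 \<le> 1" using \<delta> by (simp add: power_le_one)
    then show "54 * \<delta>^2 / 1000 \<le> 1" by simp
  qed (use n d in simp)
  finally show ?thesis by simp
qed

lemma independence_number_lower_bound:
  assumes \<delta>: "0 < \<delta>" "\<delta> \<le> 1" and d: "1 / \<delta> \<le> d"
    and l: "0 < l" "l \<le> d" "ln (10 / \<delta>) \<le> ln l"
    and G: "simple_graph V E" and avg: "avg_degree V E \<le> d"
    and tri: "real (card (triangles V E)) \<le> d^2 * real (card V) / l^3"
  shows "real (card V) * ((1 - \<delta>)^2 * (ln l - ln (10 / \<delta>)) - 1) / d \<le> real (independence_number V E)"
proof (cases "V = {}")
  case False
  let ?n = "real (card V)"
  define c where "c = 1 - \<delta>"
  define p where "p = \<delta> * l / (10 * d)"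
  define K where "K = 2 * p^3 / \<delta>"
  have fin: "finite V" and sym: "\<And>u v. E u v \<Longrightarrow> E v u" and irrefl: "\<And>u. \<not> E u u"
    using G by (auto simp: simple_graph_def)
  have n: "0 < ?n" using fin False by (simp add: card_gt_0_iff)
  have "0 < 1 / \<delta>" using \<delta> by simp
  then have d0: "0 < d" using d by linarith
  have p: "0 < p" "p \<le> \<delta> / 10" using \<delta> l d0 by (auto simp: p_def field_simps)
  have c: "0 \<le> c" using \<delta> by (simp add: c_def)
  have K: "0 < K" using p \<delta> by (simp add: K_def)
  obtain S where S: "independent_set V E S" "potential c p K E V \<le> real (card S)"
    using independent_set_ge_potential[where E = E, OF sym irrefl p(1) c K _ fin]
      key_condition[OF \<delta> p] unfolding c_def K_def by blast
  have "K * ordered_triangles E V \<le> ?n / d"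
    using triangle_term_le[OF \<delta> d0 l(1), of ?n] ordered_triangles_le_card_triangles[OF G] tri
    unfolding K_def p_def by simp
  moreover have "(1 - \<delta>)^2 * (ln l - ln (10 / \<delta>)) / d \<le> weight c p d"
    using weight_lower_bound[OF \<delta> d l(1,3)] unfolding c_def p_def .
  ultimately have "?n * ((1 - \<delta>)^2 * (ln l - ln (10 / \<delta>)) - 1) / d \<le> ?n * weight c p d - K * ordered_triangles E V"
    using mult_left_mono[of _ _ ?n] n d0 by (fastforce simp: field_simps)
  also have "\<dots> \<le> potential c p K E V"
    using potential_ge_weight_at_degree_bound[OF G False avg p(1) c] .
  also have "\<dots> \<le> real (independence_number V E)"
    using S card_le_independence_number[OF fin S(1)] by linarith
  finally show ?thesis .
qed simp

lemma eps_absorbs_constants: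
  fixes \<delta> \<epsilon> A C :: real
  assumes \<delta>: "0 < \<delta>" "\<delta> \<le> 1/8" "4 * \<delta> \<le> \<epsilon>"
    and A: "(C + 1) / (2 * \<delta>) \<le> A" and C: "0 < C"
  shows "(1 - \<epsilon>) * A \<le> (1 - \<delta>)^2 * (A - C) - 1"
proof -
  have CA: "C + 1 \<le> 2 * \<delta> * A" using A \<delta> by (simp add: divide_le_eq mult.commute)
  then have "0 < 2 * \<delta> * A" using C by linarith
  then have A0: "0 \<le> A" using \<delta> by (simp add: zero_less_mult_iff)
  then have "2 * \<delta> * A \<le> A" using \<delta> by (intro mult_left_le_one_le) auto
  then have AC: "0 \<le> A - C" using CA by linarith
  have "(1 - 2 * \<delta>) * (A - C) \<le> (1 - \<delta>)^2 * (A - C)"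
    using AC by (intro mult_right_mono) (auto simp: power2_eq_square algebra_simps)
  moreover have "4 * \<delta> * A \<le> \<epsilon> * A" using A0 \<delta> by (intro mult_right_mono) auto
  moreover have "0 \<le> \<delta> * C" using \<delta> C by simp
  ultimately show ?thesis using CA by (simp add: algebra_simps)
qed

lemma independence_number_ge_one_minus_eps:
  assumes \<delta>: "0 < \<delta>" "\<delta> \<le> 1/8" "4 * \<delta> \<le> \<epsilon>" and d: "1 / \<delta> \<le> d"
    and l: "0 < l" "l \<le> d" "(ln (10 / \<delta>) + 1) / (2 * \<delta>) \<le> ln l"
    and G: "simple_graph V E" and avg: "avg_degree V E \<le> d"
    and tri: "real (card (triangles V E)) \<le> d^2 * real (card V) / l^3"
  shows "(1 - \<epsilon>) * real (card V) * ln l / d \<le> real (independence_number V E)"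
proof -
  let ?C = "ln (10 / \<delta>)"
  have C: "0 < ?C" using \<delta> by (intro ln_gt_zero) (simp add: field_simps)
  have "(?C + 1) * (2 * \<delta>) \<le> ?C + 1" using \<delta> C by (intro mult_right_le_one_le) auto
  then have "?C + 1 \<le> (?C + 1) / (2 * \<delta>)" using \<delta> by (simp add: le_divide_eq)
  then have C_le: "?C \<le> ln l" using l(3) by linarith
  have "0 < 1 / \<delta>" using \<delta> by simp
  then have d0: "0 < d" using d by linarith
  have "(1 - \<epsilon>) * real (card V) * ln l / d = real (card V) * ((1 - \<epsilon>) * ln l) / d"
    by (simp add: mult_ac)
  also have "\<dots> \<le> real (card V) * ((1 - \<delta>)^2 * (ln l - ?C) - 1) / d"
    using eps_absorbs_constants[OF \<delta> l(3) C] d0 by (intro divide_right_mono mult_left_mono) auto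
  also have "\<dots> \<le> real (independence_number V E)"
    using \<delta> d l(1,2) C_le G avg tri by (intro independence_number_lower_bound) auto
  finally show ?thesis .
qed

theorem lemma5p2:
  fixes lam :: "real \<Rightarrow> real"
  assumes "\<And>d. lam d \<le> d"
    and "filterlim lam at_top at_top"
  shows "\<forall>\<epsilon>>0. \<exists>d0. \<forall>d\<ge>d0. \<forall>V E.
           simple_graph V E \<and> avg_degree V E \<le> d
           \<and> real (card (triangles V E)) \<le> d^2 * real (card V) / (lam d)^3
           \<longrightarrow> real (independence_number V E) \<ge> (1 - \<epsilon>) * real (card V) * ln (lam d) / d"
proof (intro allI impI)
  fix \<epsilon> :: real assume "\<epsilon> > 0"
  define \<delta> where "\<delta> = min \<epsilon> (1/2) / 4"
  have \<delta>: "0 < \<delta>" "\<delta> \<le> 1/8" "4 * \<delta> \<le> \<epsilon>" using \<open>\<epsilon> > 0\<close> by (auto simp: \<delta>_def)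
  define L where "L = (ln (10 / \<delta>) + 1) / (2 * \<delta>)"
  obtain N where N: "\<And>d. N \<le> d \<Longrightarrow> exp L \<le> lam d"
    using assms(2) unfolding filterlim_at_top eventually_at_top_linorder by blast
  have l0: "0 < lam d" if "N \<le> d" for d using N[OF that] exp_gt_zero[of L] by linarith
  have l: "L \<le> ln (lam d)" if "N \<le> d" for d using N[OF that] l0[OF that] by (simp add: ln_ge_iff)
  show "\<exists>d0. \<forall>d\<ge>d0. \<forall>V E. simple_graph V E \<and> avg_degree V E \<le> d
      \<and> real (card (triangles V E)) \<le> d^2 * real (card V) / (lam d)^3
      \<longrightarrow> real (independence_number V E) \<ge> (1 - \<epsilon>) * real (card V) * ln (lam d) / d"
    using \<delta> l0 l assms(1) unfolding L_def
    by (intro exI[of _ "max N (1 / \<delta>)"] allI impI independence_number_ge_one_minus_eps) auto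
qed

end
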